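(* Let $G$ be a connected graph with $n\geq 2$ vertices and $m$ edges, and let $T(G)$ be its triangulation. Then $$R(T(G))=\frac{2}{3}R(G)+\frac{1}{3}R^+(G)+\frac{1}{6}R^*(G)+\frac{3m^2-n^2+2mn-2m+n}{6}.$$
   Context: All graphs are finite, undirected, without loops or multiple edges. For a connected graph $H$ and vertices $i,j$, the resistance distance $\Omega_{ij}$ is the effective resistance between $i$ and $j$ in the electrical network obtained from $H$ by replacing each edge by a unit resistor. With $d_i$ the degree of vertex $i$ in $H$ and sums over unordered pairs of distinct vertices of $H$: $R(H)=\sum_{\{i,j\}\subseteq V(H)}\Omega_{ij}$ (Kirchhoff index), $R^+(H)=\sum_{\{i,j\}\subseteq V(H)}(d_i+d_j)\Omega_{ij}$ (additive degree-Kirchhoff index), and $R^*(H)=\sum_{\{i,j\}\subseteq V(H)}d_id_j\Omega_{ij}$ (multiplicative degree-Kirchhoff index). The triangulation $T(G)$ is obtained from $G$ by adding, for each edge $uv$, a new vertex $w$ adjacent to both $u$ and $v$ (keeping the edge $uv$), so each edge becomes a triangle $uwv$. *)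

theory Defs
  imports Complex_Main
begin

definition simple_graph :: "'a set \<Rightarrow> 'a set set \<Rightarrow> bool" where
  "simple_graph V E \<longleftrightarrow> finite V \<and>
     (\<forall>e\<in>E. \<exists>u v. u \<in> V \<and> v \<in> V \<and> u \<noteq> v \<and> e = {u, v})"

definition adj :: "'a set set \<Rightarrow> 'a \<Rightarrow> 'a \<Rightarrow> bool" where
  "adj E u v \<longleftrightarrow> {u, v} \<in> E"

definition connected_graph :: "'a set \<Rightarrow> 'a set set \<Rightarrow> bool" where
  "connected_graph V E \<longleftrightarrow> simple_graph V E \<and> V \<noteq> {} \<and>
     (\<forall>u\<in>V. \<forall>v\<in>V. (adj E)\<^sup>*\<^sup>* u v)"

definition degree :: "'a set \<Rightarrow> 'a set set \<Rightarrow> 'a \<Rightarrow> nat" where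
  "degree V E v = card {u \<in> V. adj E v u}"

text \<open>Electrical network with unit resistors: a unit current enters at i and leaves at j.\<close>
definition unit_current_potential :: "'a set \<Rightarrow> 'a set set \<Rightarrow> 'a \<Rightarrow> 'a \<Rightarrow> ('a \<Rightarrow> real) \<Rightarrow> bool" where
  "unit_current_potential V E i j x \<longleftrightarrow>
     (\<forall>v\<in>V. (\<Sum>u\<in>{u \<in> V. adj E v u}. x v - x u) =
              (if v = i then 1 else 0) - (if v = j then 1 else 0))"

text \<open>Effective resistance = potential difference between i and j under unit current
  (well defined for connected graphs, since potentials are unique up to an additive constant).\<close>
definition resistance :: "'a set \<Rightarrow> 'a set set \<Rightarrow> 'a \<Rightarrow> 'a \<Rightarrow> real" where
  "resistance V E i j = (THE r. \<exists>x. unit_current_potential V E i j x \<and> r = x i - x j)"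

text \<open>Sums over unordered pairs of distinct vertices, written as half of the sum
  over ordered pairs (the summands are symmetric in i, j).\<close>
definition kirchhoff :: "'a set \<Rightarrow> 'a set set \<Rightarrow> real" where
  "kirchhoff V E = (\<Sum>i\<in>V. \<Sum>j\<in>V - {i}. resistance V E i j) / 2"

definition add_deg_kirchhoff :: "'a set \<Rightarrow> 'a set set \<Rightarrow> real" where
  "add_deg_kirchhoff V E = (\<Sum>i\<in>V. \<Sum>j\<in>V - {i}.
      (real (degree V E i) + real (degree V E j)) * resistance V E i j) / 2"

definition mult_deg_kirchhoff :: "'a set \<Rightarrow> 'a set set \<Rightarrow> real" where
  "mult_deg_kirchhoff V E = (\<Sum>i\<in>V. \<Sum>j\<in>V - {i}.
      (real (degree V E i) * real (degree V E j)) * resistance V E i j) / 2"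

text \<open>Triangulation: old vertices Inl v, a new vertex Inr e for every edge e.\<close>
definition tri_vertices :: "'a set \<Rightarrow> 'a set set \<Rightarrow> ('a + 'a set) set" where
  "tri_vertices V E = Inl ` V \<union> Inr ` E"

definition tri_edges :: "'a set set \<Rightarrow> ('a + 'a set) set set" where
  "tri_edges E = (\<lambda>e. Inl ` e) ` E \<union> {{Inl u, Inr e} | u e. e \<in> E \<and> u \<in> e}"

end

theory Submission
  imports Defs "Jordan_Normal_Form.Determinant"
begin

text \<open>Every vertex g of T(G) carries a weight distribution on V: the point mass at v for an
  old vertex v, half of the mass at each endpoint for the new vertex of an edge. If f is a
  potential on G, the function taking g to 2/3 times the f-average over this distribution has,
  at an old vertex, the same Laplacian as f in G, and is harmonic at every new vertex. Hence a
  unit current from a to b in T(G) is produced by lifting the superposition of the G-potentials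
  between the points of the distributions of a and b, plus a correction of 1/2 at a or b when
  it is a new vertex. Expressing G-potential differences through resistances (reciprocity and
  the four-point formula) gives every resistance of T(G) as a combination of resistances of G,
  and summing over all pairs, with Foster's theorem for the edge terms, yields the formula.\<close>

section \<open>The graph Laplacian\<close>

definition laplacian :: "'a set \<Rightarrow> 'a set set \<Rightarrow> ('a \<Rightarrow> real) \<Rightarrow> 'a \<Rightarrow> real" where
  "laplacian V E f v = (\<Sum>u\<in>{u \<in> V. adj E v u}. f v - f u)"

lemma unit_current_potential_iff_laplacian:
  "unit_current_potential V E i j x \<longleftrightarrow>
     (\<forall>v\<in>V. laplacian V E x v = (if v = i then 1 else 0) - (if v = j then 1 else 0))"
  unfolding unit_current_potential_def laplacian_def by simp

lemma adj_commute: "adj E u v = adj E v u"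
  unfolding adj_def by (simp add: insert_commute)

lemma simple_graph_adjD: "simple_graph V E \<Longrightarrow> adj E u v \<Longrightarrow> u \<in> V \<and> v \<in> V \<and> u \<noteq> v"
  unfolding simple_graph_def adj_def by (metis doubleton_eq_iff)

lemma simple_graph_edgeE:
  assumes "simple_graph V E" "e \<in> E"
  obtains a b where "a \<in> V" "b \<in> V" "a \<noteq> b" "e = {a, b}"
  using assms unfolding simple_graph_def by blast

lemma simple_graph_finite: "simple_graph V E \<Longrightarrow> finite V"
  unfolding simple_graph_def by simp

lemma simple_graph_finite_edges:
  assumes "simple_graph V E"
  shows "finite E"
proof -
  have "E \<subseteq> Pow V"
    using simple_graph_edgeE[OF assms] by blast
  thus ?thesis
    using simple_graph_finite[OF assms] by (meson finite_Pow_iff finite_subset)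
qed

lemma connected_graph_simple: "connected_graph V E \<Longrightarrow> simple_graph V E"
  unfolding connected_graph_def by simp

lemma laplacian_eq_sum_if:
  "finite V \<Longrightarrow> laplacian V E f v = (\<Sum>u\<in>V. if adj E v u then f v - f u else 0)"
  unfolding laplacian_def by (simp add: sum.inter_filter)

lemma laplacian_diff: "laplacian V E (\<lambda>v. f v - g v) v = laplacian V E f v - laplacian V E g v"
  unfolding laplacian_def by (simp add: sum_subtractf[symmetric] algebra_simps)

lemma laplacian_add: "laplacian V E (\<lambda>v. f v + g v) v = laplacian V E f v + laplacian V E g v"
  unfolding laplacian_def by (simp add: sum.distrib[symmetric] algebra_simps)

lemma laplacian_mult_const: "laplacian V E (\<lambda>v. c * f v) v = c * laplacian V E f v"
  unfolding laplacian_def by (simp add: sum_distrib_left algebra_simps)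

lemma laplacian_sum:
  "finite A \<Longrightarrow> laplacian V E (\<lambda>v. \<Sum>k\<in>A. f k v) v = (\<Sum>k\<in>A. laplacian V E (f k) v)"
  unfolding laplacian_def by (simp add: sum_subtractf[symmetric] sum.swap[of _ _ A])

lemma sum_sum_if_symmetric_swap:
  assumes "\<And>u v. A u v = A v u"
  shows "(\<Sum>v\<in>V. \<Sum>u\<in>V. if A v u then F v u else 0) = (\<Sum>v\<in>V. \<Sum>u\<in>V. if A v u then F u v else 0)"
proof -
  have "(\<Sum>v\<in>V. \<Sum>u\<in>V. if A v u then F v u else 0) = (\<Sum>u\<in>V. \<Sum>v\<in>V. if A v u then F v u else 0)"
    by (rule sum.swap)
  also have "\<dots> = (\<Sum>v\<in>V. \<Sum>u\<in>V. if A v u then F u v else 0)"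
  proof (intro sum.cong refl)
    fix u v
    show "(if A u v then F u v else 0) = (if A v u then F u v else 0)"
      using assms[of u v] by simp
  qed
  finally show ?thesis .
qed

lemma sum_laplacian_eq_0:
  assumes "simple_graph V E"
  shows "(\<Sum>v\<in>V. laplacian V E f v) = 0"
proof -
  have fin: "finite V" using simple_graph_finite[OF assms] .
  let ?S = "\<Sum>v\<in>V. \<Sum>u\<in>V. if adj E v u then f v - f u else 0"
  have "?S = (\<Sum>v\<in>V. \<Sum>u\<in>V. if adj E v u then f u - f v else 0)"
    by (rule sum_sum_if_symmetric_swap[OF adj_commute])
  also have "\<dots> = - ?S"
    by (simp add: sum_negf[symmetric] if_distrib[of uminus] cong: if_cong)
  finally show ?thesis using laplacian_eq_sum_if[OF fin] by simp
qed

text \<open>Green's identity: both sides equal half the sum over adjacent ordered pairs of the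
  products of the increments of f and g.\<close>
lemma sum_mult_laplacian_commute:
  assumes "simple_graph V E"
  shows "(\<Sum>v\<in>V. g v * laplacian V E f v) = (\<Sum>v\<in>V. f v * laplacian V E g v)"
proof -
  have fin: "finite V" using simple_graph_finite[OF assms] .
  define Q where
    "Q f g = (\<Sum>v\<in>V. \<Sum>u\<in>V. if adj E v u then g v * (f v - f u) else 0)" for f g :: "'a \<Rightarrow> real"
  have lap_Q: "(\<Sum>v\<in>V. g v * laplacian V E f v) = Q f g" for f g
    unfolding Q_def laplacian_eq_sum_if[OF fin]
    by (simp add: sum_distrib_left if_distrib cong: if_cong)
  have "2 * Q f g = (\<Sum>v\<in>V. \<Sum>u\<in>V. if adj E v u then (g v - g u) * (f v - f u) else 0)" for f g
  proof -
    have "Q f g = (\<Sum>v\<in>V. \<Sum>u\<in>V. if adj E v u then g u * (f u - f v) else 0)"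
      unfolding Q_def by (rule sum_sum_if_symmetric_swap[OF adj_commute])
    hence "2 * Q f g = Q f g + (\<Sum>v\<in>V. \<Sum>u\<in>V. if adj E v u then g u * (f u - f v) else 0)"
      by simp
    also have "\<dots> = (\<Sum>v\<in>V. \<Sum>u\<in>V. if adj E v u then (g v - g u) * (f v - f u) else 0)"
      unfolding Q_def sum.distrib[symmetric] by (intro sum.cong refl) (simp add: algebra_simps)
    finally show ?thesis .
  qed
  hence "2 * Q f g = 2 * Q g f"
    by (simp only:) (intro sum.cong refl, simp add: mult.commute)
  hence "Q f g = Q g f" by simp
  thus ?thesis using lap_Q by simp
qed

section \<open>Harmonic functions\<close>

lemma harmonic_max_propagates:
  assumes cg: "connected_graph V E" and w: "w \<in> V" and le: "\<forall>v\<in>V. y v \<le> M" and yw: "y w = M"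
    and harmonic: "\<forall>v\<in>V. y v = M \<longrightarrow> laplacian V E y v = 0"
  shows "\<forall>u\<in>V. y u = M"
proof -
  have sg: "simple_graph V E" using connected_graph_simple[OF cg] .
  have step: "y u = M" if "v \<in> V" "y v = M" "adj E v u" for v u
  proof -
    let ?N = "{u \<in> V. adj E v u}"
    have "(\<Sum>u\<in>?N. y v - y u) = 0"
      using harmonic that unfolding laplacian_def by blast
    moreover have "\<forall>x\<in>?N. 0 \<le> y v - y x" using le that(2) by auto
    ultimately have "\<forall>x\<in>?N. y v - y x = 0"
      using sum_nonneg_eq_0_iff[of ?N "\<lambda>x. y v - y x"] simple_graph_finite[OF sg] by auto
    thus ?thesis using simple_graph_adjD[OF sg that(3)] that by auto
  qed
  show ?thesis
  proof
    fix u assume "u \<in> V"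
    hence "(adj E)\<^sup>*\<^sup>* w u" using cg w unfolding connected_graph_def by blast
    hence "u \<in> V \<and> y u = M"
      by (induction rule: rtranclp_induct) (use w yw step simple_graph_adjD[OF sg] in blast)+
    thus "y u = M" by simp
  qed
qed

lemma harmonic_imp_constant:
  assumes cg: "connected_graph V E" and harmonic: "\<forall>v\<in>V. laplacian V E y v = 0"
    and a: "a \<in> V" and b: "b \<in> V"
  shows "y a = y b"
proof -
  have fin: "finite V" using cg connected_graph_simple simple_graph_finite by blast
  have "Max (y ` V) \<in> y ` V" using fin a by (intro Max_in) auto
  then obtain w where w: "w \<in> V" "y w = Max (y ` V)" by auto
  have le: "\<forall>v\<in>V. y v \<le> Max (y ` V)" using fin by simp
  have "\<forall>u\<in>V. y u = Max (y ` V)"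
    by (rule harmonic_max_propagates[OF cg w(1) le w(2)]) (use harmonic in blast)
  thus ?thesis using a b by simp
qed

text \<open>By the maximum principle applied to y and to -y.\<close>
lemma harmonic_off_ground_eq_0:
  assumes cg: "connected_graph V E" and j: "j \<in> V"
    and harmonic: "\<forall>v\<in>V-{j}. laplacian V E y v = 0" and yj: "y j = 0"
  shows "\<forall>v\<in>V. y v = 0"
proof -
  have fin: "finite V" using cg connected_graph_simple simple_graph_finite by blast
  have nonpos: "\<forall>v\<in>V. z v \<le> 0"
    if harmonic_z: "\<forall>v\<in>V-{j}. laplacian V E z v = 0" and zj: "z j = 0" for z
  proof (rule ccontr)
    assume "\<not> (\<forall>v\<in>V. z v \<le> 0)"
    then obtain v0 where v0: "v0 \<in> V" "z v0 > 0" by force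
    have "Max (z ` V) \<in> z ` V" using fin j by (intro Max_in) auto
    then obtain w where w: "w \<in> V" "z w = Max (z ` V)" by auto
    have max_pos: "Max (z ` V) > 0"
      using v0 fin Max_ge[of "z ` V" "z v0"] by (meson finite_imageI image_eqI less_le_trans)
    have "\<forall>v\<in>V. z v = Max (z ` V) \<longrightarrow> laplacian V E z v = 0"
      using harmonic_z zj max_pos by auto
    moreover have le: "\<forall>v\<in>V. z v \<le> Max (z ` V)" using fin by simp
    ultimately have "\<forall>u\<in>V. z u = Max (z ` V)"
      using harmonic_max_propagates[OF cg w(1) le w(2)] by blast
    thus False using j zj max_pos by force
  qed
  have "\<forall>v\<in>V-{j}. laplacian V E (\<lambda>v. 0 - y v) v = 0"
    using harmonic unfolding laplacian_diff by (simp add: laplacian_def)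
  hence "\<forall>v\<in>V. 0 - y v \<le> 0" using nonpos[of "\<lambda>v. 0 - y v"] yj by simp
  thus ?thesis using nonpos[OF harmonic yj] by force
qed

section \<open>Existence and uniqueness of potentials\<close>

lemma square_system_solvable:
  fixes M :: "'a \<Rightarrow> 'a \<Rightarrow> real"
  assumes fin: "finite V"
    and injective: "\<And>y. \<forall>v\<in>V. (\<Sum>u\<in>V. M v u * y u) = 0 \<Longrightarrow> \<forall>v\<in>V. y v = 0"
  obtains y where "\<forall>v\<in>V. (\<Sum>u\<in>V. M v u * y u) = c v"
proof -
  define n where "n = card V"
  obtain g where g: "bij_betw g {0..<n} V"
    using ex_bij_betw_nat_finite[OF fin] n_def by blast
  define h where "h = the_inv_into {0..<n} g"
  have inj: "inj_on g {0..<n}" and img: "g ` {0..<n} = V"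
    using g by (auto simp: bij_betw_def)
  have hg: "h (g k) = k" if "k < n" for k
    unfolding h_def using the_inv_into_f_f[OF inj] that by simp
  have gh: "g (h u) = u" and hn: "h u < n" if "u \<in> V" for u
    unfolding h_def using f_the_inv_into_f[OF inj] the_inv_into_into[OF inj] that img
    by (auto, metis atLeastLessThan_iff order_refl)
  have gV: "g k \<in> V" if "k < n" for k using img that by auto
  define A where "A = mat n n (\<lambda>(a, k). M (g a) (g k))"
  have A: "A \<in> carrier_mat n n" unfolding A_def by simp
  have A_mult: "(A *\<^sub>v x) $ a = (\<Sum>u\<in>V. M (g a) u * x $ h u)"
    if "x \<in> carrier_vec n" "a < n" for x a
  proof -
    have "(A *\<^sub>v x) $ a = (\<Sum>k\<in>{0..<n}. M (g a) (g k) * x $ h (g k))"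
      using that by (simp add: A_def scalar_prod_def hg)
    also have "\<dots> = (\<Sum>u\<in>V. M (g a) u * x $ h u)"
      by (rule sum.reindex_bij_betw[OF g])
    finally show ?thesis .
  qed
  have "det A \<noteq> 0"
  proof
    assume "det A = 0"
    then obtain x where x: "x \<in> carrier_vec n" "x \<noteq> 0\<^sub>v n" "A *\<^sub>v x = 0\<^sub>v n"
      using det_0_iff_vec_prod_zero[OF A] by blast
    have "\<forall>v\<in>V. (\<Sum>u\<in>V. M v u * x $ h u) = 0"
      using A_mult[OF x(1) hn] x(3) hn gh by (metis index_zero_vec(1))
    hence "\<forall>u\<in>V. x $ h u = 0" by (rule injective)
    hence "x = 0\<^sub>v n"
      using x(1) gV hg by (intro eq_vecI) (auto, metis)
    with x(2) show False ..
  qed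
  then obtain B where B: "B \<in> carrier_mat n n" "A * B = 1\<^sub>m n"
    using det_non_zero_imp_unit[OF A] unfolding Units_def ring_mat_def by auto
  define x where "x = B *\<^sub>v vec n (\<lambda>a. c (g a))"
  have x: "x \<in> carrier_vec n" unfolding x_def using B(1) by simp
  have "A *\<^sub>v x = vec n (\<lambda>a. c (g a))"
    unfolding x_def using assoc_mult_mat_vec[OF A B(1), symmetric] B(2) by simp
  hence "\<forall>v\<in>V. (\<Sum>u\<in>V. M v u * x $ h u) = c v"
    using A_mult[OF x hn] hn gh by (metis index_vec)
  thus ?thesis by (rule that)
qed

definition grounded_laplacian :: "'a set \<Rightarrow> 'a set set \<Rightarrow> 'a \<Rightarrow> 'a \<Rightarrow> 'a \<Rightarrow> real" where
  "grounded_laplacian V E j v u =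
     (if v = j then (if u = v then 1 else 0)
      else (if u = v then real (card {w \<in> V. adj E v w}) else 0) - (if adj E v u then 1 else 0))"

lemma sum_grounded_laplacian:
  assumes sg: "simple_graph V E" and v: "v \<in> V"
  shows "(\<Sum>u\<in>V. grounded_laplacian V E j v u * y u) = (if v = j then y j else laplacian V E y v)"
proof -
  have fin: "finite V" using simple_graph_finite[OF sg] .
  have "\<not> adj E v v" using simple_graph_adjD[OF sg] by blast
  hence "(\<Sum>u\<in>V. grounded_laplacian V E j v u * y u) =
         (\<Sum>u\<in>V. if u = v then (if v = j then y u else real (card {w \<in> V. adj E v w}) * y u) else 0)
         - (\<Sum>u\<in>V. if adj E v u \<and> v \<noteq> j then y u else 0)"
    unfolding sum_subtractf[symmetric] by (intro sum.cong) (auto simp: grounded_laplacian_def algebra_simps)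
  also have "\<dots> = (if v = j then y j else laplacian V E y v)"
    using fin v by (simp add: laplacian_def sum_subtractf sum.inter_filter)
  finally show ?thesis .
qed

lemma unit_current_potential_exists:
  assumes cg: "connected_graph V E" and i: "i \<in> V" and j: "j \<in> V"
  shows "\<exists>x. unit_current_potential V E i j x"
proof -
  have sg: "simple_graph V E" using connected_graph_simple[OF cg] .
  have fin: "finite V" using simple_graph_finite[OF sg] .
  obtain y where y: "\<forall>v\<in>V. (\<Sum>u\<in>V. grounded_laplacian V E j v u * y u) =
                                (if v = j then 0 else if v = i then 1 else 0)"
  proof (rule square_system_solvable[OF fin])
    fix z assume z: "\<forall>v\<in>V. (\<Sum>u\<in>V. grounded_laplacian V E j v u * z u) = 0"
    have eq: "(if v = j then z j else laplacian V E z v) = 0" if "v \<in> V" for v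
      using z[rule_format, OF that] sum_grounded_laplacian[OF sg that, of j z] by simp
    have "\<forall>v\<in>V-{j}. laplacian V E z v = 0" using eq by (metis DiffE singletonI)
    moreover have "z j = 0" using eq[OF j] by simp
    ultimately show "\<forall>v\<in>V. z v = 0" by (rule harmonic_off_ground_eq_0[OF cg j])
  qed
  have off_j: "laplacian V E y v = (if v = i then 1 else 0)" if "v \<in> V - {j}" for v
    using y sum_grounded_laplacian[OF sg, of v j y] that by auto
  \<comment> \<open>the equation at j holds because the Laplacian sums to zero\<close>
  have "0 = laplacian V E y j + (\<Sum>v\<in>V-{j}. laplacian V E y v)"
    using sum_laplacian_eq_0[OF sg] fin j by (simp add: sum.remove)
  also have "(\<Sum>v\<in>V-{j}. laplacian V E y v) = (\<Sum>v\<in>V-{j}. if v = i then 1 else 0)"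
    by (rule sum.cong) (auto simp: off_j)
  finally have "laplacian V E y j = (if j = i then 1 else 0) - 1"
    using fin i by (auto split: if_splits)
  hence "unit_current_potential V E i j y"
    unfolding unit_current_potential_iff_laplacian using off_j by auto
  thus ?thesis by blast
qed

section \<open>Effective resistance\<close>

lemma resistance_eqI:
  assumes cg: "connected_graph V E" and i: "i \<in> V" and j: "j \<in> V"
    and x: "unit_current_potential V E i j x"
  shows "resistance V E i j = x i - x j"
  unfolding resistance_def
proof (rule the_equality)
  show "\<exists>x'. unit_current_potential V E i j x' \<and> x i - x j = x' i - x' j" using x by blast
next
  fix r assume "\<exists>x'. unit_current_potential V E i j x' \<and> r = x' i - x' j"
  then obtain x' where x': "unit_current_potential V E i j x'" "r = x' i - x' j" by blast
  have "\<forall>v\<in>V. laplacian V E (\<lambda>v. x v - x' v) v = 0"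
    using x x'(1) unfolding unit_current_potential_iff_laplacian laplacian_diff by simp
  hence "x i - x' i = x j - x' j" using harmonic_imp_constant[OF cg _ i j] by blast
  thus "r = x i - x j" using x'(2) by simp
qed

lemma resistance_self: "connected_graph V E \<Longrightarrow> p \<in> V \<Longrightarrow> resistance V E p p = 0"
  using resistance_eqI[of V E p p "\<lambda>_. 0"]
  unfolding unit_current_potential_iff_laplacian laplacian_def by simp

definition potential :: "'a set \<Rightarrow> 'a set set \<Rightarrow> 'a \<Rightarrow> 'a \<Rightarrow> 'a \<Rightarrow> real" where
  "potential V E p q = (SOME x. unit_current_potential V E p q x)"

lemma unit_current_potential_potential:
  "connected_graph V E \<Longrightarrow> p \<in> V \<Longrightarrow> q \<in> V \<Longrightarrow> unit_current_potential V E p q (potential V E p q)"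
  unfolding potential_def using unit_current_potential_exists by (metis someI_ex)

lemma unit_current_potential_diff:
  "unit_current_potential V E p t x \<Longrightarrow> unit_current_potential V E s t y \<Longrightarrow>
   unit_current_potential V E p s (\<lambda>v. x v - y v)"
  unfolding unit_current_potential_iff_laplacian laplacian_diff by auto

lemma unit_current_potential_unique:
  assumes cg: "connected_graph V E"
    and "unit_current_potential V E p q x" "unit_current_potential V E p q y"
    and s: "s \<in> V" and t: "t \<in> V"
  shows "x s - x t = y s - y t"
proof -
  have "\<forall>v\<in>V. laplacian V E (\<lambda>v. x v - y v) v = 0"
    using assms(2,3) unfolding unit_current_potential_iff_laplacian laplacian_diff by simp
  hence "x s - y s = x t - y t" using harmonic_imp_constant[OF cg _ s t] by blast
  thus ?thesis by simp
qed

lemma unit_current_reciprocity: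
  assumes cg: "connected_graph V E"
    and x: "unit_current_potential V E p q x" and y: "unit_current_potential V E s t y"
    and V: "p \<in> V" "q \<in> V" "s \<in> V" "t \<in> V"
  shows "x s - x t = y p - y q"
proof -
  have sg: "simple_graph V E" using connected_graph_simple[OF cg] .
  have "(\<Sum>v\<in>V. y v * laplacian V E x v) = (\<Sum>v\<in>V. x v * laplacian V E y v)"
    by (rule sum_mult_laplacian_commute[OF sg])
  moreover have "(\<Sum>v\<in>V. y v * laplacian V E x v) =
                 (\<Sum>v\<in>V. (if v = p then y v else 0) - (if v = q then y v else 0))"
    using x unfolding unit_current_potential_iff_laplacian by (intro sum.cong) auto
  moreover have "(\<Sum>v\<in>V. x v * laplacian V E y v) =
                 (\<Sum>v\<in>V. (if v = s then x v else 0) - (if v = t then x v else 0))"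
    using y unfolding unit_current_potential_iff_laplacian by (intro sum.cong) auto
  ultimately show ?thesis
    using simple_graph_finite[OF sg] V by (simp add: sum_subtractf)
qed

lemma potential_diff_three_point:
  assumes cg: "connected_graph V E" and x: "unit_current_potential V E p t x"
    and V: "p \<in> V" "s \<in> V" "t \<in> V"
  shows "x s - x t = (resistance V E p t + resistance V E s t - resistance V E p s) / 2"
proof -
  define y where "y = potential V E s t"
  have y: "unit_current_potential V E s t y"
    unfolding y_def by (rule unit_current_potential_potential[OF cg V(2,3)])
  have "x s - x t = y p - y t"
    using unit_current_reciprocity[OF cg x y V(1,3,2,3)] .
  moreover have "resistance V E p s = (x p - y p) - (x s - y s)"
    using resistance_eqI[OF cg V(1,2) unit_current_potential_diff[OF x y]] .
  moreover have "resistance V E p t = x p - x t" using resistance_eqI[OF cg V(1,3) x] .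
  moreover have "resistance V E s t = y s - y t" using resistance_eqI[OF cg V(2,3) y] .
  ultimately show ?thesis by (simp add: field_simps)
qed

lemma potential_diff_four_point:
  assumes cg: "connected_graph V E" and x: "unit_current_potential V E p q x"
    and V: "p \<in> V" "q \<in> V" "s \<in> V" "t \<in> V"
  shows "x s - x t =
           (resistance V E p t + resistance V E q s - resistance V E p s - resistance V E q t) / 2"
proof -
  define a where "a = potential V E p t"
  define b where "b = potential V E q t"
  have a: "unit_current_potential V E p t a"
    unfolding a_def by (rule unit_current_potential_potential[OF cg V(1,4)])
  have b: "unit_current_potential V E q t b"
    unfolding b_def by (rule unit_current_potential_potential[OF cg V(2,4)])
  have "x s - x t = (a s - b s) - (a t - b t)"
    using unit_current_potential_unique[OF cg x unit_current_potential_diff[OF a b] V(3,4)] .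
  moreover have "a s - a t = (resistance V E p t + resistance V E s t - resistance V E p s) / 2"
    by (rule potential_diff_three_point[OF cg a V(1,3,4)])
  moreover have "b s - b t = (resistance V E q t + resistance V E s t - resistance V E q s) / 2"
    by (rule potential_diff_three_point[OF cg b V(2,3,4)])
  ultimately show ?thesis by (simp add: field_simps)
qed

text \<open>Foster's theorem, summed over ordered pairs of adjacent vertices. With all potentials
  grounded at one vertex j0, the sum becomes the sum over v of the Laplacian at v of the
  potential driving current from v to j0.\<close>
lemma foster:
  assumes cg: "connected_graph V E"
  shows "(\<Sum>p\<in>V. \<Sum>t\<in>V. if adj E p t then resistance V E p t else 0) = 2 * (real (card V) - 1)"
proof -
  have fin: "finite V" using cg connected_graph_simple simple_graph_finite by blast
  obtain j0 where j0: "j0 \<in> V" using cg unfolding connected_graph_def by blast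
  define \<psi> where "\<psi> v = potential V E v j0" for v
  have \<psi>: "unit_current_potential V E v j0 (\<psi> v)" if "v \<in> V" for v
    unfolding \<psi>_def by (rule unit_current_potential_potential[OF cg that j0])
  have r: "resistance V E p t = (\<psi> p p - \<psi> p t) + (\<psi> t t - \<psi> t p)" if "p \<in> V" "t \<in> V" for p t
    using resistance_eqI[OF cg that unit_current_potential_diff[OF \<psi>[OF that(1)] \<psi>[OF that(2)]]]
    by simp
  let ?S = "\<Sum>p\<in>V. \<Sum>t\<in>V. if adj E p t then \<psi> p p - \<psi> p t else 0"
  have "(\<Sum>p\<in>V. \<Sum>t\<in>V. if adj E p t then resistance V E p t else 0) =
        ?S + (\<Sum>p\<in>V. \<Sum>t\<in>V. if adj E p t then \<psi> t t - \<psi> t p else 0)"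
    unfolding sum.distrib[symmetric] by (intro sum.cong refl) (auto simp: r)
  also have "(\<Sum>p\<in>V. \<Sum>t\<in>V. if adj E p t then \<psi> t t - \<psi> t p else 0) = ?S"
    by (rule sum_sum_if_symmetric_swap[OF adj_commute])
  also have "?S = (\<Sum>p\<in>V. laplacian V E (\<psi> p) p)"
    unfolding laplacian_eq_sum_if[OF fin] ..
  also have "\<dots> = (\<Sum>p\<in>V. 1 - (if p = j0 then 1 else 0))"
    by (intro sum.cong refl) (use \<psi> in \<open>auto simp: unit_current_potential_iff_laplacian\<close>)
  also have "\<dots> = real (card V) - 1" using fin j0 by (simp add: sum_subtractf)
  finally show ?thesis by simp
qed

section \<open>The triangulation as a graph\<close>

lemma adj_tri_Inl_Inl: "adj (tri_edges E) (Inl u) (Inl v) \<longleftrightarrow> adj E u v"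
proof
  assume "adj (tri_edges E) (Inl u) (Inl v)"
  then obtain e where e: "e \<in> E" "{Inl u, Inl v} = (Inl ` e :: ('a + 'a set) set)"
    unfolding adj_def tri_edges_def by (auto simp: doubleton_eq_iff)
  have "(Inl ` e :: ('a + 'a set) set) = Inl ` {u, v}" using e(2)[symmetric] by simp
  hence "e = {u, v}" by (metis inj_Inl inj_image_eq_iff)
  thus "adj E u v" unfolding adj_def using e by simp
next
  assume "adj E u v"
  hence "(Inl ` {u, v} :: ('a + 'a set) set) \<in> (\<lambda>e. Inl ` e) ` E" unfolding adj_def by blast
  thus "adj (tri_edges E) (Inl u) (Inl v)" unfolding adj_def tri_edges_def by simp
qed

lemma adj_tri_Inl_Inr: "adj (tri_edges E) (Inl u) (Inr e) \<longleftrightarrow> e \<in> E \<and> u \<in> e"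
  unfolding adj_def tri_edges_def by (auto simp: doubleton_eq_iff)

lemma adj_tri_Inr_Inl: "adj (tri_edges E) (Inr e) (Inl u) \<longleftrightarrow> e \<in> E \<and> u \<in> e"
  using adj_tri_Inl_Inr adj_commute by metis

lemma not_adj_tri_Inr_Inr: "\<not> adj (tri_edges E) (Inr e) (Inr f)"
  unfolding adj_def tri_edges_def by (auto simp: doubleton_eq_iff)

lemma finite_tri_vertices: "finite V \<Longrightarrow> finite E \<Longrightarrow> finite (tri_vertices V E)"
  unfolding tri_vertices_def by simp

lemma simple_graph_triangulation:
  assumes sg: "simple_graph V E"
  shows "simple_graph (tri_vertices V E) (tri_edges E)"
  unfolding simple_graph_def
proof (intro conjI ballI)
  show "finite (tri_vertices V E)"
    by (rule finite_tri_vertices[OF simple_graph_finite[OF sg] simple_graph_finite_edges[OF sg]])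
next
  fix x assume "x \<in> tri_edges E"
  then consider e where "e \<in> E" "x = Inl ` e" | u e where "e \<in> E" "u \<in> e" "x = {Inl u, Inr e}"
    unfolding tri_edges_def by blast
  thus "\<exists>u v. u \<in> tri_vertices V E \<and> v \<in> tri_vertices V E \<and> u \<noteq> v \<and> x = {u, v}"
  proof cases
    case (1 e)
    then obtain a b where "a \<in> V" "b \<in> V" "a \<noteq> b" "e = {a, b}"
      using simple_graph_edgeE[OF sg] by metis
    thus ?thesis using 1 unfolding tri_vertices_def
      by (intro exI[of _ "Inl a"] exI[of _ "Inl b"]) simp
  next
    case (2 u e)
    have "u \<in> V" using simple_graph_edgeE[OF sg 2(1)] 2(2) by blast
    thus ?thesis using 2 unfolding tri_vertices_def
      by (intro exI[of _ "Inl u"] exI[of _ "Inr e"]) simp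
  qed
qed

lemma connected_graph_triangulation:
  assumes cg: "connected_graph V E"
  shows "connected_graph (tri_vertices V E) (tri_edges E)"
proof -
  have sg: "simple_graph V E" using connected_graph_simple[OF cg] .
  let ?A = "adj (tri_edges E)"
  have lift: "?A\<^sup>*\<^sup>* (Inl u) (Inl v)" if "(adj E)\<^sup>*\<^sup>* u v" for u v
    using that by (induction rule: rtranclp_induct)
      (auto simp: adj_tri_Inl_Inl intro: rtranclp.rtrancl_into_rtrancl)
  have to_old: "\<exists>v\<in>V. ?A\<^sup>*\<^sup>* x (Inl v) \<and> ?A\<^sup>*\<^sup>* (Inl v) x" if x: "x \<in> tri_vertices V E" for x
  proof (cases x)
    case (Inl v)
    then show ?thesis using x unfolding tri_vertices_def by auto
  next
    case (Inr e)
    hence e: "e \<in> E" using x unfolding tri_vertices_def by auto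
    then obtain a b where ab: "a \<in> V" "e = {a, b}" using simple_graph_edgeE[OF sg] by metis
    have "?A x (Inl a)" "?A (Inl a) x"
      using Inr e ab(2) by (simp_all add: adj_tri_Inl_Inr adj_tri_Inr_Inl)
    thus ?thesis using ab(1) by blast
  qed
  show ?thesis unfolding connected_graph_def
  proof (intro conjI ballI)
    show "simple_graph (tri_vertices V E) (tri_edges E)" by (rule simple_graph_triangulation[OF sg])
    show "tri_vertices V E \<noteq> {}" using cg unfolding connected_graph_def tri_vertices_def by auto
  next
    fix x y assume "x \<in> tri_vertices V E" "y \<in> tri_vertices V E"
    then obtain u v where "u \<in> V" "?A\<^sup>*\<^sup>* x (Inl u)" "v \<in> V" "?A\<^sup>*\<^sup>* (Inl v) y"
      using to_old by meson
    moreover have "(adj E)\<^sup>*\<^sup>* u v" using cg calculation unfolding connected_graph_def by blast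
    ultimately show "?A\<^sup>*\<^sup>* x y" using lift by (meson rtranclp_trans)
  qed
qed

lemma tri_neighbours_Inl:
  assumes "v \<in> V"
  shows "{g \<in> tri_vertices V E. adj (tri_edges E) (Inl v) g} =
           Inl ` {u \<in> V. adj E v u} \<union> Inr ` {e \<in> E. v \<in> e}"
  unfolding tri_vertices_def by (auto simp: adj_tri_Inl_Inl adj_tri_Inl_Inr)

lemma tri_neighbours_Inr:
  assumes sg: "simple_graph V E" and e: "e \<in> E"
  shows "{g \<in> tri_vertices V E. adj (tri_edges E) (Inr e) g} = Inl ` e"
proof -
  have "e \<subseteq> V" using simple_graph_edgeE[OF sg e] by auto
  thus ?thesis unfolding tri_vertices_def using e
    by (auto simp: adj_tri_Inr_Inl not_adj_tri_Inr_Inr)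
qed

lemma bij_betw_neighbours_incident_edges:
  assumes sg: "simple_graph V E" and v: "v \<in> V"
  shows "bij_betw (\<lambda>u. {v, u}) {u \<in> V. adj E v u} {e \<in> E. v \<in> e}"
proof (rule bij_betwI')
  show "({v, x} = {v, y}) = (x = y)" for x y by (auto simp: doubleton_eq_iff)
  show "{v, u} \<in> {e \<in> E. v \<in> e}" if "u \<in> {u \<in> V. adj E v u}" for u
    using that by (simp add: adj_def)
  show "\<exists>u\<in>{u \<in> V. adj E v u}. e = {v, u}" if "e \<in> {e \<in> E. v \<in> e}" for e
  proof -
    have e: "e \<in> E" "v \<in> e" using that by auto
    obtain a b where ab: "a \<in> V" "b \<in> V" "e = {a, b}"
      using simple_graph_edgeE[OF sg e(1)] by metis
    show ?thesis using e ab by (auto simp: adj_def insert_commute)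
  qed
qed

lemma card_incident_edges:
  assumes "simple_graph V E" "v \<in> V"
  shows "card {e \<in> E. v \<in> e} = Defs.degree V E v"
  unfolding Defs.degree_def
  using bij_betw_same_card[OF bij_betw_neighbours_incident_edges[OF assms]] by (rule sym)

lemma edges_containing_both:
  assumes sg: "simple_graph V E" and pt: "p \<noteq> t"
  shows "{e \<in> E. t \<in> e \<and> p \<in> e} = (if adj E p t then {{p, t}} else {})"
proof -
  have "e = {p, t}" if "e \<in> E" "t \<in> e" "p \<in> e" for e
    using simple_graph_edgeE[OF sg that(1)] that(2,3) pt by blast
  hence "{e \<in> E. t \<in> e \<and> p \<in> e} = {{p, t}} \<inter> E" by blast
  thus ?thesis unfolding adj_def by simp
qed

lemma sum_tri_vertices:
  assumes "finite V" "finite E"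
  shows "(\<Sum>g\<in>tri_vertices V E. f g) = (\<Sum>v\<in>V. f (Inl v)) + (\<Sum>e\<in>E. f (Inr e))"
  unfolding tri_vertices_def using assms
  by (subst sum.union_disjoint) (auto simp: sum.reindex)

lemma card_tri_vertices:
  assumes "finite V" "finite E"
  shows "card (tri_vertices V E) = card V + card E"
  unfolding tri_vertices_def using assms
  by (subst card_Un_disjoint) (auto simp: card_image)

section \<open>Potentials and resistances of the triangulation\<close>

definition tri_weight :: "('a + 'a set) \<Rightarrow> 'a \<Rightarrow> real" where
  "tri_weight g p = (case g of Inl v \<Rightarrow> if p = v then 1 else 0 | Inr e \<Rightarrow> if p \<in> e then 1/2 else 0)"

definition tri_offset :: "('a + 'a set) \<Rightarrow> real" where
  "tri_offset g = (case g of Inl v \<Rightarrow> 0 | Inr e \<Rightarrow> 1/2)"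

definition tri_bump :: "('a + 'a set) \<Rightarrow> ('a + 'a set) \<Rightarrow> real" where
  "tri_bump a g = (if g = a then tri_offset a else 0)"

definition tri_lift :: "'a set \<Rightarrow> ('a \<Rightarrow> real) \<Rightarrow> ('a + 'a set) \<Rightarrow> real" where
  "tri_lift V f g = 2/3 * (\<Sum>s\<in>V. tri_weight g s * f s)"

lemma tri_weight_simps [simp]:
  "tri_weight (Inl v) p = (if p = v then 1 else 0)"
  "tri_weight (Inr e) p = (if p \<in> e then 1/2 else 0)"
  unfolding tri_weight_def by simp_all

lemma tri_offset_simps [simp]: "tri_offset (Inl v) = 0" "tri_offset (Inr e) = 1/2"
  unfolding tri_offset_def by simp_all

lemma tri_bump_Inl: "tri_bump (Inl w) = (\<lambda>_. 0)"
  unfolding tri_bump_def by auto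

lemma sum_half_edge:
  fixes f :: "'a \<Rightarrow> real"
  assumes "finite V" "a \<in> V" "b \<in> V" "a \<noteq> b"
  shows "(\<Sum>s\<in>V. (if s \<in> {a, b} then 1/2 else 0) * f s) = (f a + f b) / 2"
proof -
  have "(\<Sum>s\<in>V. (if s \<in> {a, b} then 1/2 else 0) * f s) =
        (\<Sum>s\<in>V. (if s = a then f s / 2 else 0) + (if s = b then f s / 2 else 0))"
    by (rule sum.cong) (use assms in auto)
  also have "\<dots> = (f a + f b) / 2" using assms by (simp add: sum.distrib)
  finally show ?thesis .
qed

lemma sum_tri_weight:
  assumes sg: "simple_graph V E" and g: "g \<in> tri_vertices V E"
  shows "(\<Sum>p\<in>V. tri_weight g p) = 1"
proof (cases g)
  case (Inl v)
  then show ?thesis using g simple_graph_finite[OF sg] unfolding tri_vertices_def by auto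
next
  case (Inr e)
  hence "e \<in> E" using g unfolding tri_vertices_def by auto
  then obtain a b where ab: "a \<in> V" "b \<in> V" "a \<noteq> b" "e = {a, b}"
    using simple_graph_edgeE[OF sg] by metis
  show ?thesis
    using sum_half_edge[OF simple_graph_finite[OF sg] ab(1-3), of "\<lambda>_. 1"] Inr ab(4) by simp
qed

lemma tri_lift_Inl: "finite V \<Longrightarrow> v \<in> V \<Longrightarrow> tri_lift V f (Inl v) = 2/3 * f v"
  unfolding tri_lift_def tri_weight_simps by (simp add: if_distrib[of "\<lambda>c. c * _"] cong: if_cong)

lemma tri_lift_Inr:
  "finite V \<Longrightarrow> a \<in> V \<Longrightarrow> b \<in> V \<Longrightarrow> a \<noteq> b \<Longrightarrow> tri_lift V f (Inr {a, b}) = (f a + f b) / 3"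
  unfolding tri_lift_def tri_weight_simps using sum_half_edge[of V a b f] by simp

lemma laplacian_tri_lift_Inl:
  assumes sg: "simple_graph V E" and v: "v \<in> V"
  shows "laplacian (tri_vertices V E) (tri_edges E) (tri_lift V f) (Inl v) = laplacian V E f v"
proof -
  have fin: "finite V" using simple_graph_finite[OF sg] .
  have finE: "finite E" using simple_graph_finite_edges[OF sg] .
  let ?F = "tri_lift V f"
  let ?N = "{u \<in> V. adj E v u}"
  let ?Ev = "{e \<in> E. v \<in> e}"
  have "laplacian (tri_vertices V E) (tri_edges E) ?F (Inl v) =
        (\<Sum>g\<in>Inl ` ?N \<union> Inr ` ?Ev. ?F (Inl v) - ?F g)"
    unfolding laplacian_def tri_neighbours_Inl[OF v] ..
  also have "\<dots> = (\<Sum>u\<in>?N. ?F (Inl v) - ?F (Inl u)) + (\<Sum>e\<in>?Ev. ?F (Inl v) - ?F (Inr e))"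
    using fin finE by (subst sum.union_disjoint) (auto simp: sum.reindex)
  also have "(\<Sum>e\<in>?Ev. ?F (Inl v) - ?F (Inr e)) = (\<Sum>u\<in>?N. ?F (Inl v) - ?F (Inr {v, u}))"
    by (rule sum.reindex_bij_betw[OF bij_betw_neighbours_incident_edges[OF sg v], symmetric])
  also have "(\<Sum>u\<in>?N. ?F (Inl v) - ?F (Inl u)) + (\<Sum>u\<in>?N. ?F (Inl v) - ?F (Inr {v, u})) =
             (\<Sum>u\<in>?N. f v - f u)"
    unfolding sum.distrib[symmetric]
  proof (rule sum.cong[OF refl])
    fix u assume "u \<in> ?N"
    hence u: "u \<in> V" "v \<noteq> u" using simple_graph_adjD[OF sg] by auto
    show "?F (Inl v) - ?F (Inl u) + (?F (Inl v) - ?F (Inr {v, u})) = f v - f u"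
      using tri_lift_Inl[OF fin v, where f = f] tri_lift_Inl[OF fin u(1), where f = f]
        tri_lift_Inr[OF fin v u, where f = f]
      by (simp add: field_simps)
  qed
  finally show ?thesis unfolding laplacian_def .
qed

lemma laplacian_tri_lift_Inr:
  assumes sg: "simple_graph V E" and e: "e \<in> E"
  shows "laplacian (tri_vertices V E) (tri_edges E) (tri_lift V f) (Inr e) = 0"
proof -
  have fin: "finite V" using simple_graph_finite[OF sg] .
  obtain a b where ab: "a \<in> V" "b \<in> V" "a \<noteq> b" "e = {a, b}"
    using simple_graph_edgeE[OF sg e] by metis
  have "laplacian (tri_vertices V E) (tri_edges E) (tri_lift V f) (Inr e) =
        (tri_lift V f (Inr e) - tri_lift V f (Inl a)) + (tri_lift V f (Inr e) - tri_lift V f (Inl b))"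
    unfolding laplacian_def tri_neighbours_Inr[OF sg e] using ab(3,4) by simp
  thus ?thesis
    using tri_lift_Inl[OF fin ab(1)] tri_lift_Inl[OF fin ab(2)] tri_lift_Inr[OF fin ab(1-3)] ab(4)
    by (simp add: field_simps)
qed

lemma laplacian_tri_bump_Inl:
  assumes sg: "simple_graph V E" and a: "a \<in> tri_vertices V E"
  shows "laplacian (tri_vertices V E) (tri_edges E) (tri_bump a) (Inl v) =
           (if Inl v = a then 1 else 0) - tri_weight a v"
proof (cases a)
  case (Inl w)
  then show ?thesis unfolding Inl tri_bump_Inl by (simp add: laplacian_def)
next
  case (Inr e)
  hence e: "e \<in> E" using a unfolding tri_vertices_def by auto
  have fin: "finite (tri_vertices V E)"
    using simple_graph_triangulation[OF sg] simple_graph_finite by blast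
  let ?S = "{g \<in> tri_vertices V E. adj (tri_edges E) (Inl v) g}"
  have "laplacian (tri_vertices V E) (tri_edges E) (tri_bump a) (Inl v) =
        (\<Sum>g\<in>?S. - (if g = Inr e then 1/2 else 0))"
    unfolding laplacian_def tri_bump_def Inr by (rule sum.cong) auto
  also have "\<dots> = - (if v \<in> e then 1/2 else 0)"
    using fin a Inr e by (simp add: sum_negf adj_tri_Inl_Inr)
  finally show ?thesis using Inr by simp
qed

lemma laplacian_tri_bump_Inr:
  assumes sg: "simple_graph V E" and e: "e \<in> E"
  shows "laplacian (tri_vertices V E) (tri_edges E) (tri_bump a) (Inr e) = (if Inr e = a then 1 else 0)"
proof -
  obtain x y where "x \<noteq> y" "e = {x, y}" using simple_graph_edgeE[OF sg e] by metis
  hence "laplacian (tri_vertices V E) (tri_edges E) (tri_bump a) (Inr e) = 2 * tri_bump a (Inr e)"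
    unfolding laplacian_def tri_neighbours_Inr[OF sg e] by (cases a) (auto simp: tri_bump_def)
  thus ?thesis by (cases a) (auto simp: tri_bump_def)
qed

lemma sum_product_mult_diff:
  fixes a b c d :: "'a \<Rightarrow> real"
  shows "(\<Sum>p\<in>A. \<Sum>q\<in>B. a p * b q * (c p - d q)) =
           (\<Sum>p\<in>A. a p * c p) * (\<Sum>q\<in>B. b q) - (\<Sum>p\<in>A. a p) * (\<Sum>q\<in>B. b q * d q)"
  unfolding sum_product sum_subtractf[symmetric]
  by (intro sum.cong refl) (simp add: algebra_simps)

definition mixed_potential :: "'a set \<Rightarrow> 'a set set \<Rightarrow> ('a + 'a set) \<Rightarrow> ('a + 'a set) \<Rightarrow> 'a \<Rightarrow> real" where
  "mixed_potential V E a b s =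
     (\<Sum>p\<in>V. \<Sum>q\<in>V. tri_weight a p * tri_weight b q * potential V E p q s)"

definition tri_potential ::
    "'a set \<Rightarrow> 'a set set \<Rightarrow> ('a + 'a set) \<Rightarrow> ('a + 'a set) \<Rightarrow> ('a + 'a set) \<Rightarrow> real" where
  "tri_potential V E a b g = tri_lift V (mixed_potential V E a b) g + tri_bump a g - tri_bump b g"

definition weighted_resistance :: "'a set \<Rightarrow> 'a set set \<Rightarrow> ('a + 'a set) \<Rightarrow> 'a \<Rightarrow> real" where
  "weighted_resistance V E g x = (\<Sum>p\<in>V. tri_weight g p * resistance V E p x)"

definition mean_resistance :: "'a set \<Rightarrow> 'a set set \<Rightarrow> ('a + 'a set) \<Rightarrow> ('a + 'a set) \<Rightarrow> real" where
  "mean_resistance V E g h = (\<Sum>t\<in>V. tri_weight h t * weighted_resistance V E g t)"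

lemma laplacian_mixed_potential:
  assumes cg: "connected_graph V E" and a: "a \<in> tri_vertices V E" and b: "b \<in> tri_vertices V E"
    and v: "v \<in> V"
  shows "laplacian V E (mixed_potential V E a b) v = tri_weight a v - tri_weight b v"
proof -
  have sg: "simple_graph V E" using connected_graph_simple[OF cg] .
  have fin: "finite V" using simple_graph_finite[OF sg] .
  have "laplacian V E (mixed_potential V E a b) v =
        (\<Sum>p\<in>V. \<Sum>q\<in>V. tri_weight a p * tri_weight b q * laplacian V E (potential V E p q) v)"
    unfolding mixed_potential_def by (simp only: laplacian_sum[OF fin] laplacian_mult_const)
  also have "\<dots> = (\<Sum>p\<in>V. \<Sum>q\<in>V. tri_weight a p * tri_weight b q *
                      ((if v = p then 1 else 0) - (if v = q then 1 else 0)))"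
    using unit_current_potential_potential[OF cg] v
    unfolding unit_current_potential_iff_laplacian by (intro sum.cong refl) auto
  also have "\<dots> = tri_weight a v - tri_weight b v"
    unfolding sum_product_mult_diff
    using sum_tri_weight[OF sg a] sum_tri_weight[OF sg b] fin v
    by (simp add: if_distrib cong: if_cong)
  finally show ?thesis .
qed

lemma unit_current_tri_potential:
  assumes cg: "connected_graph V E" and a: "a \<in> tri_vertices V E" and b: "b \<in> tri_vertices V E"
  shows "unit_current_potential (tri_vertices V E) (tri_edges E) a b (tri_potential V E a b)"
  unfolding unit_current_potential_iff_laplacian
proof
  have sg: "simple_graph V E" using connected_graph_simple[OF cg] .
  let ?L = "laplacian (tri_vertices V E) (tri_edges E)"
  fix g assume g: "g \<in> tri_vertices V E"
  have "?L (tri_potential V E a b) g =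
        ?L (tri_lift V (mixed_potential V E a b)) g + ?L (tri_bump a) g - ?L (tri_bump b) g"
    unfolding tri_potential_def[abs_def] laplacian_diff laplacian_add ..
  also have "\<dots> = (if g = a then 1 else 0) - (if g = b then 1 else 0)"
  proof (cases g)
    case (Inl v)
    hence v: "v \<in> V" using g unfolding tri_vertices_def by auto
    show ?thesis
      unfolding Inl laplacian_tri_lift_Inl[OF sg v] laplacian_mixed_potential[OF cg a b v]
        laplacian_tri_bump_Inl[OF sg a] laplacian_tri_bump_Inl[OF sg b]
      by simp
  next
    case (Inr e)
    hence e: "e \<in> E" using g unfolding tri_vertices_def by auto
    show ?thesis
      unfolding Inr laplacian_tri_lift_Inr[OF sg e] laplacian_tri_bump_Inr[OF sg e] by simp
  qed
  finally show "?L (tri_potential V E a b) g = (if g = a then 1 else 0) - (if g = b then 1 else 0)" .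
qed

lemma mixed_potential_diff:
  assumes cg: "connected_graph V E" and a: "a \<in> tri_vertices V E" and b: "b \<in> tri_vertices V E"
    and s: "s \<in> V" and t: "t \<in> V"
  shows "mixed_potential V E a b s - mixed_potential V E a b t =
           (weighted_resistance V E b s - weighted_resistance V E a s) / 2
           - (weighted_resistance V E b t - weighted_resistance V E a t) / 2"
proof -
  have sg: "simple_graph V E" using connected_graph_simple[OF cg] .
  let ?r = "resistance V E"
  have "mixed_potential V E a b s - mixed_potential V E a b t =
        (\<Sum>p\<in>V. \<Sum>q\<in>V. tri_weight a p * tri_weight b q * (potential V E p q s - potential V E p q t))"
    unfolding mixed_potential_def sum_subtractf[symmetric]
    by (intro sum.cong refl) (simp add: algebra_simps)
  also have "\<dots> = (\<Sum>p\<in>V. \<Sum>q\<in>V. tri_weight a p * tri_weight b q *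
                     ((?r p t - ?r p s) / 2 - (?r q t - ?r q s) / 2))"
  proof (intro sum.cong refl)
    fix p q assume p: "p \<in> V" and q: "q \<in> V"
    have "potential V E p q s - potential V E p q t = (?r p t + ?r q s - ?r p s - ?r q t) / 2"
      by (rule potential_diff_four_point[OF cg unit_current_potential_potential[OF cg p q] p q s t])
    also have "\<dots> = (?r p t - ?r p s) / 2 - (?r q t - ?r q s) / 2" by argo
    finally show "tri_weight a p * tri_weight b q * (potential V E p q s - potential V E p q t) =
          tri_weight a p * tri_weight b q * ((?r p t - ?r p s) / 2 - (?r q t - ?r q s) / 2)"
      by (simp only:)
  qed
  also have "\<dots> = (\<Sum>p\<in>V. tri_weight a p * ((?r p t - ?r p s) / 2))
                  - (\<Sum>q\<in>V. tri_weight b q * ((?r q t - ?r q s) / 2))"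
    unfolding sum_product_mult_diff using sum_tri_weight[OF sg a] sum_tri_weight[OF sg b] by simp
  also have "\<dots> = (weighted_resistance V E b s - weighted_resistance V E a s) / 2
                  - (weighted_resistance V E b t - weighted_resistance V E a t) / 2"
    unfolding weighted_resistance_def
    by (simp add: sum_subtractf[symmetric] sum_divide_distrib[symmetric] field_simps)
  finally show ?thesis .
qed

lemma resistance_triangulation:
  assumes cg: "connected_graph V E" and a: "a \<in> tri_vertices V E" and b: "b \<in> tri_vertices V E"
    and ab: "a \<noteq> b"
  shows "resistance (tri_vertices V E) (tri_edges E) a b =
           tri_offset a + tri_offset b + (mean_resistance V E a b + mean_resistance V E b a
             - mean_resistance V E a a - mean_resistance V E b b) / 3"
proof -
  have sg: "simple_graph V E" using connected_graph_simple[OF cg] .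
  let ?F = "mixed_potential V E a b"
  let ?R = "weighted_resistance V E"
  have "resistance (tri_vertices V E) (tri_edges E) a b = tri_potential V E a b a - tri_potential V E a b b"
    by (rule resistance_eqI[OF connected_graph_triangulation[OF cg] a b unit_current_tri_potential[OF cg a b]])
  also have "\<dots> = tri_lift V ?F a - tri_lift V ?F b + tri_offset a + tri_offset b"
    unfolding tri_potential_def tri_bump_def using ab by simp
  also have "tri_lift V ?F a - tri_lift V ?F b =
             2/3 * (\<Sum>s\<in>V. \<Sum>t\<in>V. tri_weight a s * tri_weight b t * (?F s - ?F t))"
    unfolding tri_lift_def sum_product_mult_diff
    using sum_tri_weight[OF sg a] sum_tri_weight[OF sg b] by (simp add: algebra_simps)
  also have "(\<Sum>s\<in>V. \<Sum>t\<in>V. tri_weight a s * tri_weight b t * (?F s - ?F t)) =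
             (\<Sum>s\<in>V. \<Sum>t\<in>V. tri_weight a s * tri_weight b t * ((?R b s - ?R a s) / 2 - (?R b t - ?R a t) / 2))"
    by (intro sum.cong refl) (simp add: mixed_potential_diff[OF cg a b])
  also have "\<dots> = (\<Sum>s\<in>V. tri_weight a s * ((?R b s - ?R a s) / 2))
                  - (\<Sum>t\<in>V. tri_weight b t * ((?R b t - ?R a t) / 2))"
    unfolding sum_product_mult_diff using sum_tri_weight[OF sg a] sum_tri_weight[OF sg b] by simp
  also have "\<dots> = ((mean_resistance V E b a - mean_resistance V E a a)
                   - (mean_resistance V E b b - mean_resistance V E a b)) / 2"
    unfolding mean_resistance_def
    by (simp add: sum_subtractf[symmetric] sum_divide_distrib[symmetric] field_simps)
  finally show ?thesis by (simp add: field_simps)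
qed

section \<open>Summing over all pairs\<close>

lemma half_sum_pairs_eq:
  fixes f :: "'b \<Rightarrow> 'b \<Rightarrow> real" and c :: "'b \<Rightarrow> real" and D :: "'b \<Rightarrow> 'b \<Rightarrow> real"
  assumes fin: "finite T"
    and f: "\<And>a b. a \<in> T \<Longrightarrow> b \<in> T \<Longrightarrow> a \<noteq> b \<Longrightarrow>
              f a b = c a + c b + (D a b + D b a - D a a - D b b) / 3"
  shows "(\<Sum>a\<in>T. \<Sum>b\<in>T - {a}. f a b) / 2 =
           (real (card T) - 1) * (\<Sum>a\<in>T. c a) + ((\<Sum>a\<in>T. \<Sum>b\<in>T. D a b) - real (card T) * (\<Sum>a\<in>T. D a a)) / 3"
proof -
  define G where "G a b = c a + c b + (D a b + D b a - D a a - D b b) / 3" for a b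
  have "(\<Sum>b\<in>T - {a}. f a b) = (\<Sum>b\<in>T. G a b) - 2 * c a" if "a \<in> T" for a
  proof -
    have "(\<Sum>b\<in>T - {a}. f a b) = (\<Sum>b\<in>T - {a}. G a b)"
      using that by (intro sum.cong) (auto simp: f G_def)
    also have "\<dots> = (\<Sum>b\<in>T. G a b) - G a a" using fin that by (simp add: sum_diff1)
    finally show ?thesis by (simp add: G_def)
  qed
  hence "(\<Sum>a\<in>T. \<Sum>b\<in>T - {a}. f a b) = (\<Sum>a\<in>T. \<Sum>b\<in>T. G a b) - 2 * (\<Sum>a\<in>T. c a)"
    by (simp add: sum_subtractf sum_distrib_left)
  also have "(\<Sum>a\<in>T. \<Sum>b\<in>T. G a b) = 2 * real (card T) * (\<Sum>a\<in>T. c a)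
      + 2 * ((\<Sum>a\<in>T. \<Sum>b\<in>T. D a b) - real (card T) * (\<Sum>a\<in>T. D a a)) / 3"
    unfolding G_def
    by (simp add: sum.distrib sum_subtractf sum_divide_distrib[symmetric] sum_distrib_left
        sum.swap[of "\<lambda>a b. D b a"] algebra_simps) (simp add: sum_distrib_right)
  finally show ?thesis by (simp add: field_simps)
qed

lemma sum_tri_weight_at:
  assumes sg: "simple_graph V E" and p: "p \<in> V"
  shows "(\<Sum>g\<in>tri_vertices V E. tri_weight g p) = 1 + real (Defs.degree V E p) / 2"
proof -
  have fin: "finite V" and finE: "finite E"
    using simple_graph_finite[OF sg] simple_graph_finite_edges[OF sg] .
  have "(\<Sum>g\<in>tri_vertices V E. tri_weight g p) =
        (\<Sum>v\<in>V. if p = v then 1 else 0) + (\<Sum>e\<in>E. if p \<in> e then 1/2 else 0)"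
    unfolding sum_tri_vertices[OF fin finE] by simp
  also have "\<dots> = 1 + real (card {e \<in> E. p \<in> e}) / 2"
    using fin finE p by (simp add: sum.inter_filter[symmetric])
  finally show ?thesis using card_incident_edges[OF sg p] by simp
qed

lemma sum_tri_offset:
  "simple_graph V E \<Longrightarrow> (\<Sum>g\<in>tri_vertices V E. tri_offset g) = real (card E) / 2"
  by (simp add: sum_tri_vertices simple_graph_finite simple_graph_finite_edges)

lemma sum_degree_weighted_resistance:
  assumes cg: "connected_graph V E"
  shows "(\<Sum>t\<in>V. (1 + real (Defs.degree V E t) / 2) *
             (\<Sum>p\<in>V. (1 + real (Defs.degree V E p) / 2) * resistance V E p t))
    = 2 * kirchhoff V E + add_deg_kirchhoff V E + mult_deg_kirchhoff V E / 2"
proof -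
  have fin: "finite V" using cg connected_graph_simple simple_graph_finite by blast
  let ?r = "resistance V E"
  let ?d = "\<lambda>x. real (Defs.degree V E x)"
  let ?g = "\<lambda>p t. (1 + ?d p / 2) * (1 + ?d t / 2) * ?r p t"
  have "(\<Sum>t\<in>V. (1 + ?d t / 2) * (\<Sum>p\<in>V. (1 + ?d p / 2) * ?r p t)) = (\<Sum>t\<in>V. \<Sum>p\<in>V. ?g p t)"
    unfolding sum_distrib_left by (intro sum.cong refl) (simp add: algebra_simps)
  also have "\<dots> = (\<Sum>p\<in>V. \<Sum>t\<in>V. ?g p t)" by (rule sum.swap)
  also have "\<dots> = (\<Sum>p\<in>V. \<Sum>t\<in>V - {p}. ?g p t)"
  proof (rule sum.cong[OF refl])
    fix p assume p: "p \<in> V"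
    show "(\<Sum>t\<in>V. ?g p t) = (\<Sum>t\<in>V - {p}. ?g p t)"
      using fin p resistance_self[OF cg p] by (simp add: sum.remove)
  qed
  also have "\<dots> = (\<Sum>p\<in>V. \<Sum>t\<in>V - {p}. ?r p t + ((?d p + ?d t) * ?r p t) / 2 + (?d p * ?d t * ?r p t) / 4)"
    by (intro sum.cong refl) (simp add: field_simps)
  also have "\<dots> = (\<Sum>p\<in>V. \<Sum>t\<in>V - {p}. ?r p t) + (\<Sum>p\<in>V. \<Sum>t\<in>V - {p}. (?d p + ?d t) * ?r p t) / 2
      + (\<Sum>p\<in>V. \<Sum>t\<in>V - {p}. ?d p * ?d t * ?r p t) / 4"
    by (simp add: sum.distrib sum_divide_distrib)
  also have "\<dots> = 2 * kirchhoff V E + add_deg_kirchhoff V E + mult_deg_kirchhoff V E / 2"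
    unfolding kirchhoff_def add_deg_kirchhoff_def mult_deg_kirchhoff_def by simp
  finally show ?thesis .
qed

text \<open>Every vertex p of G receives total weight 1 + deg p / 2 from the vertices of T(G).\<close>
lemma sum_mean_resistance:
  assumes cg: "connected_graph V E"
  shows "(\<Sum>a\<in>tri_vertices V E. \<Sum>b\<in>tri_vertices V E. mean_resistance V E a b) =
           2 * kirchhoff V E + add_deg_kirchhoff V E + mult_deg_kirchhoff V E / 2"
proof -
  have sg: "simple_graph V E" using connected_graph_simple[OF cg] .
  let ?T = "tri_vertices V E"
  let ?w = "\<lambda>p. 1 + real (Defs.degree V E p) / 2"
  have "(\<Sum>a\<in>?T. \<Sum>b\<in>?T. mean_resistance V E a b) =
        (\<Sum>a\<in>?T. \<Sum>t\<in>V. (\<Sum>b\<in>?T. tri_weight b t) * weighted_resistance V E a t)"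
    unfolding mean_resistance_def by (intro sum.cong refl) (simp add: sum.swap[of _ ?T] sum_distrib_right)
  also have "\<dots> = (\<Sum>a\<in>?T. \<Sum>t\<in>V. ?w t * weighted_resistance V E a t)"
    by (intro sum.cong refl) (simp add: sum_tri_weight_at[OF sg])
  also have "\<dots> = (\<Sum>t\<in>V. ?w t * (\<Sum>a\<in>?T. weighted_resistance V E a t))"
    by (subst sum.swap) (simp add: sum_distrib_left)
  also have "\<dots> = (\<Sum>t\<in>V. ?w t * (\<Sum>p\<in>V. ?w p * resistance V E p t))"
  proof (intro sum.cong refl arg_cong[where f = "\<lambda>x. _ * x"])
    fix t
    have "(\<Sum>a\<in>?T. weighted_resistance V E a t) =
          (\<Sum>p\<in>V. (\<Sum>a\<in>?T. tri_weight a p) * resistance V E p t)"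
      unfolding weighted_resistance_def by (simp add: sum.swap[of _ ?T] sum_distrib_right)
    also have "\<dots> = (\<Sum>p\<in>V. ?w p * resistance V E p t)"
      by (intro sum.cong refl) (simp add: sum_tri_weight_at[OF sg])
    finally show "(\<Sum>a\<in>?T. weighted_resistance V E a t) = \<dots>" .
  qed
  also have "\<dots> = 2 * kirchhoff V E + add_deg_kirchhoff V E + mult_deg_kirchhoff V E / 2"
    by (rule sum_degree_weighted_resistance[OF cg])
  finally show ?thesis .
qed

text \<open>Only the new vertices contribute, each with a quarter of the resistance of its edge;
  the total is then given by Foster's theorem.\<close>
lemma sum_mean_resistance_diagonal:
  assumes cg: "connected_graph V E"
  shows "(\<Sum>g\<in>tri_vertices V E. mean_resistance V E g g) = (real (card V) - 1) / 2"
proof -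
  have sg: "simple_graph V E" using connected_graph_simple[OF cg] .
  have fin: "finite V" and finE: "finite E"
    using simple_graph_finite[OF sg] simple_graph_finite_edges[OF sg] .
  let ?r = "resistance V E"
  have old: "mean_resistance V E (Inl v) (Inl v) = 0" if v: "v \<in> V" for v
    unfolding mean_resistance_def weighted_resistance_def
    using fin v resistance_self[OF cg v] by (simp add: if_distrib[of "\<lambda>c. c * _"] cong: if_cong)
  have new: "mean_resistance V E (Inr e) (Inr e) =
               (\<Sum>t\<in>V. \<Sum>p\<in>V. if t \<in> e \<and> p \<in> e then ?r p t / 4 else 0)" for e
    unfolding mean_resistance_def weighted_resistance_def sum_distrib_left
    by (intro sum.cong refl) auto
  have "(\<Sum>g\<in>tri_vertices V E. mean_resistance V E g g) =
        (\<Sum>t\<in>V. \<Sum>p\<in>V. \<Sum>e\<in>E. if t \<in> e \<and> p \<in> e then ?r p t / 4 else 0)"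
    unfolding sum_tri_vertices[OF fin finE] using old new by (simp add: sum.swap[of _ E])
  also have "\<dots> = (\<Sum>t\<in>V. \<Sum>p\<in>V. if adj E p t then ?r p t / 4 else 0)"
  proof (intro sum.cong refl)
    fix t p assume t: "t \<in> V" and p: "p \<in> V"
    show "(\<Sum>e\<in>E. if t \<in> e \<and> p \<in> e then ?r p t / 4 else 0) = (if adj E p t then ?r p t / 4 else 0)"
    proof (cases "p = t")
      case True
      thus ?thesis using resistance_self[OF cg t] by (simp cong: if_cong)
    next
      case False
      thus ?thesis using finE edges_containing_both[OF sg False]
        by (simp add: sum.inter_filter[symmetric])
    qed
  qed
  also have "\<dots> = (\<Sum>p\<in>V. \<Sum>t\<in>V. if adj E p t then ?r p t else 0) / 4"
    by (subst sum.swap) (simp add: sum_divide_distrib if_distrib[of "\<lambda>x. x / 4"] cong: if_cong)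
  also have "\<dots> = (real (card V) - 1) / 2" using foster[OF cg] by simp
  finally show ?thesis .
qed

theorem theorem4p3:
  fixes V :: "'a set" and E :: "'a set set"
  assumes "connected_graph V E"
    and "card V \<ge> 2"
  defines "n \<equiv> real (card V)" and "m \<equiv> real (card E)"
  shows "kirchhoff (tri_vertices V E) (tri_edges E) =
           2/3 * kirchhoff V E + 1/3 * add_deg_kirchhoff V E + 1/6 * mult_deg_kirchhoff V E
           + (3 * m^2 - n^2 + 2 * m * n - 2 * m + n) / 6"
proof -
  note cg = \<open>connected_graph V E\<close>
  have sg: "simple_graph V E" using connected_graph_simple[OF cg] .
  have fin: "finite V" and finE: "finite E"
    using simple_graph_finite[OF sg] simple_graph_finite_edges[OF sg] .
  let ?T = "tri_vertices V E"
  have "kirchhoff ?T (tri_edges E) =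
        (real (card ?T) - 1) * (\<Sum>a\<in>?T. tri_offset a)
        + ((\<Sum>a\<in>?T. \<Sum>b\<in>?T. mean_resistance V E a b) - real (card ?T) * (\<Sum>a\<in>?T. mean_resistance V E a a)) / 3"
    unfolding kirchhoff_def
    by (rule half_sum_pairs_eq[OF finite_tri_vertices[OF fin finE] resistance_triangulation[OF cg]])
  also have "\<dots> = (n + m - 1) * (m / 2)
        + (2 * kirchhoff V E + add_deg_kirchhoff V E + mult_deg_kirchhoff V E / 2 - (n + m) * ((n - 1) / 2)) / 3"
    unfolding card_tri_vertices[OF fin finE] sum_tri_offset[OF sg] sum_mean_resistance[OF cg]
      sum_mean_resistance_diagonal[OF cg] n_def m_def by simp
  finally show ?thesis by (simp add: field_simps power2_eq_square)
qed

end
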